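(* Let $\theta\in\mathbb{R}\setminus2\pi\mathbb{Z}$, $a\in\mathbb{C}\setminus\{0\}$, and let $G\subset\mathcal{H}(1,\mathbb{C})$ be the group generated by $h:z\mapsto e^{i\theta}z$ and $f=(a,e^{i\theta}):z\mapsto e^{i\theta}(z-a)+a$. Then exactly one of the following holds: (i) every orbit of $G$ is dense in $\mathbb{C}$; this is the case if and only if $\theta\notin H_2\cup H_3$ (equivalently $f\notin\mathcal{SR}_1$); (ii) every orbit of $G$ is closed and discrete in $\mathbb{C}$; this is the case if and only if $\theta\in H_2\cup H_3$ (equivalently $f\in\mathcal{SR}_1$).
   Context: $\mathcal{H}(1,\mathbb{C})$ is the group of maps $z\mapsto\lambda z+b$ of $\mathbb{C}$, $\lambda\in\mathbb{C}^*$, $b\in\mathbb{C}$. $H_2=(\frac{\pi}{2}+\pi\mathbb{Z})\cup\pi\mathbb{Z}$, $F_2=\{e^{ix}:x\in H_2\}$, $H_3=(\frac{\pi}{3}+\pi\mathbb{Z})\cup(-\frac{\pi}{3}+\pi\mathbb{Z})\cup\pi\mathbb{Z}$, $F_3=\{e^{ix}:x\in H_3\}$, $\mathcal{SR}_1=\{z\mapsto\lambda z+b:\ \lambda\in F_2\cup F_3,\ b\in\mathbb{C}\}$. Orbits: $G(z)=\{g(z):g\in G\}$. *)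

theory Defs
  imports "HOL-Analysis.Analysis"
begin

definition aff :: "complex \<Rightarrow> complex \<Rightarrow> complex \<Rightarrow> complex" where
  "aff l b = (\<lambda>z. l * z + b)"

inductive_set gen_group :: "(complex \<Rightarrow> complex) set \<Rightarrow> (complex \<Rightarrow> complex) set"
  for S where
    gen_id: "id \<in> gen_group S"
  | gen_base: "s \<in> S \<Longrightarrow> s \<in> gen_group S"
  | gen_inv: "s \<in> S \<Longrightarrow> inv s \<in> gen_group S"
  | gen_comp: "g1 \<in> gen_group S \<Longrightarrow> g2 \<in> gen_group S \<Longrightarrow> g1 \<circ> g2 \<in> gen_group S"

definition orbit :: "(complex \<Rightarrow> complex) set \<Rightarrow> complex \<Rightarrow> complex set" where
  "orbit G z = {g z | g. g \<in> G}"

definition H2 :: "real set" where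
  "H2 = {pi/2 + pi * of_int k | k. True} \<union> {pi * of_int k | k. True}"

definition H3 :: "real set" where
  "H3 = {pi/3 + pi * of_int k | k. True} \<union> {- pi/3 + pi * of_int k | k. True}
        \<union> {pi * of_int k | k. True}"

definition F2 :: "complex set" where
  "F2 = {cis x | x. x \<in> H2}"

definition F3 :: "complex set" where
  "F3 = {cis x | x. x \<in> H3}"

definition SR1 :: "(complex \<Rightarrow> complex) set" where
  "SR1 = {aff l b | l b. l \<in> F2 \<union> F3}"

definition closed_discrete :: "complex set \<Rightarrow> bool" where
  "closed_discrete A \<longleftrightarrow> closed A \<and> (\<forall>x\<in>A. \<exists>e>0. ball x e \<inter> A = {x})"

end

theory Submission
  imports Defs
begin

text \<open>
  Write l = e^(i\<theta>).  The group G generated by h(z) = l z and f(z) = l (z - a) + a contains the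
  translation h^-1 \<circ> f by t = a (1 - l)/l \<noteq> 0, and conjugating translations by h multiplies
  their vectors by l.  Consequently the orbit of z is {l^n z + t r | n \<in> \<int>, r \<in> \<int>[l, 1/l]},
  and everything depends on the ring \<int>[l, 1/l], i.e. on the trace l + 1/l = 2 cos \<theta>:
  - if 2 cos \<theta> \<notin> \<int>, the fractional part of l + 1/l has powers tending to 0, so \<int>[l, 1/l]
    contains arbitrarily small elements w, and the nets t w (\<int> + \<int> l) make every orbit dense;
  - if 2 cos \<theta> = c \<in> \<int>, then l^2 = c l - 1, so \<int>[l, 1/l] is the lattice \<int> + \<int> l, whose
    non-zero points have norm \<ge> 1, and l^12 = 1; every orbit is a union of twelve lattice cosets,
    hence closed and discrete.
\<close>

lemma mem_H_iff:
  "\<theta> \<in> H2 \<union> H3 \<longleftrightarrow> (\<exists>y\<in>{0, pi/2, pi/3, -pi/3}. \<exists>k::int. \<theta> = y + pi * of_int k)"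
  unfolding H2_def H3_def by auto

lemma H_shift_pi:
  assumes "\<theta> \<in> H2 \<union> H3" shows "\<theta> + pi * of_int n \<in> H2 \<union> H3"
proof -
  obtain y k where "y \<in> {0, pi/2, pi/3, -pi/3}" "\<theta> = y + pi * of_int k"
    using assms unfolding mem_H_iff by blast
  moreover have "y + pi * of_int k + pi * of_int n = y + pi * of_int (k + n)"
    by (simp add: algebra_simps)
  ultimately show ?thesis unfolding mem_H_iff by metis
qed

lemma H_uminus:
  assumes "\<theta> \<in> H2 \<union> H3" shows "- \<theta> \<in> H2 \<union> H3"
proof -
  obtain y k where y: "y \<in> {0, pi/2, pi/3, -pi/3}" and th: "\<theta> = y + pi * of_int k"
    using assms unfolding mem_H_iff by blast
  have base: "y' + pi * of_int m \<in> H2 \<union> H3" if "y' \<in> {0, pi/2, pi/3, -pi/3}" for y' m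
    using that unfolding mem_H_iff by blast
  have "- y \<in> H2 \<union> H3" using y
  proof (elim insertE emptyE)
    assume "y = 0" then show ?thesis using base[of 0 0] by simp
  next
    assume "y = pi/2"
    then have "- y = pi/2 + pi * of_int (-1)" by simp
    moreover have "pi/2 + pi * of_int (-1) \<in> H2 \<union> H3" by (rule base) simp
    ultimately show ?thesis by (simp only:)
  next
    assume y: "y = pi/3" show ?thesis unfolding y using base[of "-pi/3" 0] by simp
  next
    assume y: "y = -pi/3" show ?thesis unfolding y using base[of "pi/3" 0] by simp
  qed
  then have "- y + pi * of_int (- k) \<in> H2 \<union> H3" by (rule H_shift_pi)
  then show ?thesis using th by (simp add: algebra_simps)
qed

lemma cos_add_int_pi: "cos (y + pi * of_int k) = cos y \<or> cos (y + pi * of_int k) = - cos y"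
proof -
  have sin0: "sin (pi * of_int k) = 0" by (simp add: sin_zero_iff_int2 mult.commute)
  then have "cos (pi * of_int k) = 1 \<or> cos (pi * of_int k) = -1"
    using sin_cos_squared_add[of "pi * of_int k"] by (simp add: power2_eq_1_iff)
  then show ?thesis by (auto simp: cos_add sin0)
qed

text \<open>The arithmetic meaning of the exceptional angles: \<theta> \<in> H2 \<union> H3 iff 2 cos \<theta> is an integer.
  This reduces the whole dichotomy to the trace l + 1/l of l = e^(i\<theta>).\<close>
lemma H_iff_twice_cos_Ints: "\<theta> \<in> H2 \<union> H3 \<longleftrightarrow> 2 * cos \<theta> \<in> \<int>"
proof
  assume "\<theta> \<in> H2 \<union> H3"
  then obtain y k where y: "y \<in> {0, pi/2, pi/3, -pi/3}" and th: "\<theta> = y + pi * of_int k"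
    unfolding mem_H_iff by blast
  have "cos (- (pi/3)) = 1/2" using cos_60 by simp
  then have "2 * cos y \<in> \<int>" using y by (elim insertE emptyE; hypsubst; simp add: cos_60)
  then show "2 * cos \<theta> \<in> \<int>"
    using cos_add_int_pi[of y k] th by (metis Ints_minus mult_minus_right)
next
  assume "2 * cos \<theta> \<in> \<int>"
  then obtain c :: int where c: "2 * cos \<theta> = of_int c" by (elim Ints_cases)
  have "\<bar>of_int c\<bar> \<le> (2::real)" using abs_cos_le_one[of \<theta>] unfolding c[symmetric] by (simp add: abs_mult)
  then have "c \<in> {-2, -1, 0, 1, 2}" by auto
  then obtain y where y: "y \<in> H2 \<union> H3" and cos_y: "cos \<theta> = cos y"
  proof (elim insertE emptyE)
    assume "c = -2"
    then show thesis using that[of "0 + pi * of_int 1"] c mem_H_iff by auto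
  next
    assume "c = -1"
    then show thesis using that[of "-pi/3 + pi * of_int 1"] c cos_120 mem_H_iff by auto
  next
    assume "c = 0"
    then show thesis using that[of "pi/2 + pi * of_int 0"] c mem_H_iff by auto
  next
    assume "c = 1"
    then show thesis using that[of "pi/3 + pi * of_int 0"] c cos_60 mem_H_iff by auto
  next
    assume "c = 2"
    then show thesis using that[of "0 + pi * of_int 0"] c mem_H_iff by auto
  qed
  then obtain n where n: "n \<in> \<int>" and "\<theta> = y + 2 * n * pi \<or> \<theta> = - y + 2 * n * pi"
    unfolding cos_eq by blast
  moreover obtain m :: int where "n = of_int m" using n by (elim Ints_cases)
  ultimately have "\<theta> = y + pi * of_int (2 * m) \<or> \<theta> = - y + pi * of_int (2 * m)"
    by (simp add: algebra_simps)
  then show "\<theta> \<in> H2 \<union> H3" using y by (metis H_shift_pi H_uminus)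
qed

text \<open>The rotation by \<theta> about a lies in SR1 iff \<theta> \<in> H2 \<union> H3: the linear part of an affine map
  determines it, and F2 \<union> F3 only sees cos \<theta>.\<close>
lemma rotation_about_in_SR1_iff:
  "(\<lambda>z. cis \<theta> * (z - a) + a) \<in> SR1 \<longleftrightarrow> \<theta> \<in> H2 \<union> H3"
proof
  have F: "F2 \<union> F3 = cis ` (H2 \<union> H3)" unfolding F2_def F3_def by auto
  assume "(\<lambda>z. cis \<theta> * (z - a) + a) \<in> SR1"
  then obtain m b where m: "m \<in> F2 \<union> F3" and f: "(\<lambda>z. cis \<theta> * (z - a) + a) = aff m b"
    unfolding SR1_def by blast
  have "m = aff m b 1 - aff m b 0" by (simp add: aff_def)
  also have "\<dots> = cis \<theta>" unfolding f[symmetric] by (simp add: algebra_simps)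
  finally have "cis \<theta> = m" ..
  from m have "m \<in> cis ` (H2 \<union> H3)" unfolding F .
  then obtain x where x: "x \<in> H2 \<union> H3" and "m = cis x" by (rule imageE)
  then have "cos x = cos \<theta>" using \<open>cis \<theta> = m\<close> by (metis cis.sel(1))
  then show "\<theta> \<in> H2 \<union> H3" using x H_iff_twice_cos_Ints[of x] H_iff_twice_cos_Ints[of \<theta>] by simp
next
  assume "\<theta> \<in> H2 \<union> H3"
  then have "cis \<theta> \<in> F2 \<union> F3" unfolding F2_def F3_def by blast
  moreover have "(\<lambda>z. cis \<theta> * (z - a) + a) = aff (cis \<theta>) (a * (1 - cis \<theta>))"
    unfolding aff_def by (auto simp: fun_eq_iff algebra_simps)
  ultimately show "(\<lambda>z. cis \<theta> * (z - a) + a) \<in> SR1" unfolding SR1_def by blast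
qed

lemma gen_group_inv:
  assumes "\<forall>s\<in>S. bij s" and "g \<in> gen_group S"
  shows "bij g \<and> inv g \<in> gen_group S"
  using assms(2)
proof induction
  case gen_id
  then show ?case by (simp only: bij_id inv_id gen_group.gen_id)
next
  case (gen_base s)
  then show ?case using assms(1) by (simp add: gen_group.gen_inv)
next
  case (gen_inv s)
  then have "bij s" using assms(1) by blast
  then show ?case using gen_inv by (simp add: bij_imp_bij_inv inv_inv_eq gen_group.gen_base)
next
  case (gen_comp g1 g2)
  then show ?case by (metis bij_comp o_inv_distrib gen_group.gen_comp)
qed

lemma affine_bij_inv:
  fixes u b :: complex
  assumes "u \<noteq> 0"
  shows "bij (\<lambda>z. u * z + b)" and "inv (\<lambda>z. u * z + b) = (\<lambda>z. (z - b) / u)"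
proof -
  have left: "(\<lambda>z. (z - b) / u) \<circ> (\<lambda>z. u * z + b) = id"
    and right: "(\<lambda>z. u * z + b) \<circ> (\<lambda>z. (z - b) / u) = id"
    using assms by (auto simp: fun_eq_iff)
  show "bij (\<lambda>z. u * z + b)" using o_bij[OF left right] .
  show "inv (\<lambda>z. u * z + b) = (\<lambda>z. (z - b) / u)" using inv_unique_comp[OF right left] .
qed

lemma scaling_power_in_gen_group:
  assumes "(\<lambda>z. u * z) \<in> gen_group S"
  shows "(\<lambda>z. u ^ n * z) \<in> gen_group S"
proof (induction n)
  case 0
  then show ?case using gen_group.gen_id by (simp add: id_def)
next
  case (Suc n)
  have "(\<lambda>z. u ^ Suc n * z) = (\<lambda>z. u * z) \<circ> (\<lambda>z. u ^ n * z)" by (auto simp: fun_eq_iff)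
  then show ?case using gen_group.gen_comp[OF assms Suc.IH] by (simp only:)
qed

inductive_set int_laurent :: "complex \<Rightarrow> complex set" for l where
  one: "1 \<in> int_laurent l"
| add: "x \<in> int_laurent l \<Longrightarrow> y \<in> int_laurent l \<Longrightarrow> x + y \<in> int_laurent l"
| uminus: "x \<in> int_laurent l \<Longrightarrow> - x \<in> int_laurent l"
| mult_l: "x \<in> int_laurent l \<Longrightarrow> l * x \<in> int_laurent l"
| div_l: "x \<in> int_laurent l \<Longrightarrow> x / l \<in> int_laurent l"

lemma int_laurent_mult:
  assumes "x \<in> int_laurent l" and "y \<in> int_laurent l"
  shows "x * y \<in> int_laurent l"
  using assms(1)
proof induction
  case one
  then show ?case using assms(2) by simp
next
  case (add x1 x2)
  then show ?case by (simp add: distrib_right int_laurent.add)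
next
  case (uminus x)
  then show ?case using int_laurent.uminus by fastforce
next
  case (mult_l x)
  then show ?case using int_laurent.mult_l by (fastforce simp: mult.assoc)
next
  case (div_l x)
  then show ?case using int_laurent.div_l by (fastforce simp: times_divide_eq_left)
qed

lemma int_laurent_of_int: "of_int k \<in> int_laurent l"
proof -
  have zero: "0 \<in> int_laurent l"
    using int_laurent.add[OF int_laurent.one int_laurent.uminus[OF int_laurent.one]] by simp
  have nat: "of_nat n \<in> int_laurent l" for n
    by (induction n) (auto simp: zero intro: int_laurent.add int_laurent.one)
  show ?thesis
  proof (cases "k \<ge> 0")
    case True
    then show ?thesis using nat[of "nat k"] by simp
  next
    case False
    then show ?thesis using int_laurent.uminus[OF nat[of "nat (- k)"]] by simp
  qed
qed

lemma int_laurent_self: "l \<in> int_laurent l"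
  and int_laurent_inverse: "inverse l \<in> int_laurent l"
  using int_laurent.mult_l[OF int_laurent.one] int_laurent.div_l[OF int_laurent.one]
  by (simp_all add: inverse_eq_divide)

lemma int_laurent_power_int: "l powi n \<in> int_laurent l"
proof -
  have pow: "x ^ m \<in> int_laurent l" if "x \<in> int_laurent l" for x m
    by (induction m) (auto intro: int_laurent.one int_laurent_mult that)
  show ?thesis unfolding power_int_def using pow[OF int_laurent_self] pow[OF int_laurent_inverse] by simp
qed

text \<open>The quotient of the
  two generators is the translation by t; for l = e^(i\<theta>) and t = a (1 - l)/l the second generator
  is the rotation by \<theta> about a.\<close>
abbreviation rot_group :: "complex \<Rightarrow> complex \<Rightarrow> (complex \<Rightarrow> complex) set" where
  "rot_group l t \<equiv> gen_group {\<lambda>z. l * z, \<lambda>z. l * z + l * t}"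

lemma rot_group_generators:
  fixes l t :: complex
  assumes "l \<noteq> 0"
  shows "\<forall>s\<in>{\<lambda>z. l * z, \<lambda>z. l * z + l * t}. bij s"
    and "inv (\<lambda>z. l * z) = (\<lambda>z. z / l)"
    and "inv (\<lambda>z. l * z + l * t) = (\<lambda>z. z / l - t)"
  using affine_bij_inv[OF assms, of 0] affine_bij_inv[OF assms, of "l * t"] assms
  by (auto simp: diff_divide_distrib)

text \<open>The translation subgroup: translation by t r belongs to the group for every r \<in> \<int>[l, 1/l],
  since conjugating a translation by the rotation multiplies its vector by l.\<close>
lemma rot_group_translation:
  assumes l: "l \<noteq> 0" and r: "r \<in> int_laurent l"
  shows "(\<lambda>z. z + t * r) \<in> rot_group l t"
  using r
proof induction
  case one
  have "(\<lambda>z. z + t * 1) = inv (\<lambda>z. l * z) \<circ> (\<lambda>z. l * z + l * t)"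
    using l unfolding rot_group_generators(2)[OF l] by (auto simp: fun_eq_iff field_simps)
  then show ?case by (simp add: gen_group.gen_inv gen_group.gen_base gen_group.gen_comp)
next
  case (add x y)
  have "(\<lambda>z. z + t * (x + y)) = (\<lambda>z. z + t * x) \<circ> (\<lambda>z. z + t * y)"
    by (auto simp: fun_eq_iff algebra_simps)
  then show ?case using add by (simp add: gen_group.gen_comp)
next
  case (uminus x)
  have "(\<lambda>z. z + t * (- x)) = inv (\<lambda>z. z + t * x)"
    by (rule inv_unique_comp[symmetric]) (auto simp: fun_eq_iff)
  then show ?case using gen_group_inv[OF rot_group_generators(1)[OF l] uminus.IH] by simp
next
  case (mult_l x)
  have "(\<lambda>z. z + t * (l * x)) = (\<lambda>z. l * z) \<circ> (\<lambda>z. z + t * x) \<circ> inv (\<lambda>z. l * z)"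
    using l unfolding rot_group_generators(2)[OF l] by (auto simp: fun_eq_iff field_simps)
  then show ?case using mult_l by (simp add: gen_group.gen_inv gen_group.gen_base gen_group.gen_comp)
next
  case (div_l x)
  have "(\<lambda>z. z + t * (x / l)) = inv (\<lambda>z. l * z) \<circ> (\<lambda>z. z + t * x) \<circ> (\<lambda>z. l * z)"
    using l unfolding rot_group_generators(2)[OF l] by (auto simp: fun_eq_iff field_simps)
  then show ?case using div_l by (simp add: gen_group.gen_inv gen_group.gen_base gen_group.gen_comp)
qed

lemma rot_group_scaling:
  assumes l: "l \<noteq> 0"
  shows "(\<lambda>z. l powi n * z) \<in> rot_group l t"
proof -
  have "(\<lambda>z. l * z) \<in> rot_group l t" by (simp add: gen_group.gen_base)
  moreover have "(\<lambda>z. inverse l * z) = inv (\<lambda>z. l * z)"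
    unfolding rot_group_generators(2)[OF l] by (simp add: fun_eq_iff divide_inverse mult.commute)
  then have "(\<lambda>z. inverse l * z) \<in> rot_group l t" by (simp add: gen_group.gen_inv)
  ultimately show ?thesis
    unfolding power_int_def by (simp add: scaling_power_in_gen_group)
qed

lemma rot_group_affine_member:
  assumes "l \<noteq> 0" and "r \<in> int_laurent l"
  shows "(\<lambda>z. l powi n * z + t * r) \<in> rot_group l t"
proof -
  have "(\<lambda>z. l powi n * z + t * r) = (\<lambda>z. z + t * r) \<circ> (\<lambda>z. l powi n * z)" by auto
  then show ?thesis
    using assms by (simp add: gen_group.gen_comp rot_group_translation rot_group_scaling)
qed

lemma rot_group_element:
  assumes l: "l \<noteq> 0" and g: "g \<in> rot_group l t"
  shows "\<exists>n. \<exists>r\<in>int_laurent l. g = (\<lambda>z. l powi n * z + t * r)"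
  using g
proof induction
  case gen_id
  show ?case by (intro exI[of _ 0] bexI[of _ 0]) (auto simp: int_laurent_of_int[of 0, simplified])
next
  case (gen_base s)
  then show ?case
  proof (elim insertE emptyE)
    assume "s = (\<lambda>z. l * z)"
    then show ?case
      by (intro exI[of _ 1] bexI[of _ 0]) (auto simp: int_laurent_of_int[of 0, simplified])
  next
    assume "s = (\<lambda>z. l * z + l * t)"
    then show ?case
      by (intro exI[of _ 1] bexI[of _ l]) (auto simp: int_laurent_self)
  qed
next
  case (gen_inv s)
  then show ?case
  proof (elim insertE emptyE)
    assume "s = (\<lambda>z. l * z)"
    then show ?case using l
      by (intro exI[of _ "-1"] bexI[of _ 0])
        (auto simp: rot_group_generators power_int_minus divide_inverse int_laurent_of_int[of 0, simplified])
  next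
    assume "s = (\<lambda>z. l * z + l * t)"
    then show ?case using l
      by (intro exI[of _ "-1"] bexI[of _ "-1"])
        (auto simp: rot_group_generators power_int_minus divide_inverse int_laurent_of_int[of "-1", simplified])
  qed
next
  case (gen_comp g1 g2)
  then obtain m n r s where rs: "r \<in> int_laurent l" "s \<in> int_laurent l"
    and g: "g1 = (\<lambda>z. l powi m * z + t * r)" "g2 = (\<lambda>z. l powi n * z + t * s)"
    by blast
  have "g1 \<circ> g2 = (\<lambda>z. l powi (m + n) * z + t * (r + l powi m * s))"
    using l unfolding g by (auto simp: fun_eq_iff algebra_simps power_int_add)
  moreover have "r + l powi m * s \<in> int_laurent l"
    by (intro int_laurent.add int_laurent_mult int_laurent_power_int rs)
  ultimately show ?case by blast
qed

lemma orbit_rot_group: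
  assumes "l \<noteq> 0"
  shows "orbit (rot_group l t) z = {l powi n * z + t * r | n r. r \<in> int_laurent l}"
  unfolding orbit_def
proof safe
  fix g assume "g \<in> rot_group l t"
  then obtain n r where "r \<in> int_laurent l" "g = (\<lambda>z. l powi n * z + t * r)"
    using rot_group_element[OF assms] by blast
  then show "\<exists>n r. g z = l powi n * z + t * r \<and> r \<in> int_laurent l" by blast
next
  fix n r assume "r \<in> int_laurent l"
  then show "\<exists>g. l powi n * z + t * r = g z \<and> g \<in> rot_group l t"
    by (intro exI[of _ "\<lambda>z. l powi n * z + t * r"]) (simp add: rot_group_affine_member[OF assms])
qed

text \<open>For |l| = 1 the inverse of l is its conjugate, so l + 1/l = 2 Re l is real.\<close>
lemma unit_complex_cnj:
  assumes "norm l = 1"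
  shows "l * cnj l = 1" and "1 / l = cnj l"
proof -
  show unit: "l * cnj l = 1" using complex_norm_square[of l] assms by simp
  moreover have "l \<noteq> 0" using assms by auto
  ultimately show "1 / l = cnj l" by (simp add: divide_eq_eq mult.commute)
qed

lemma unit_cnj_eq:
  assumes "2 * Re l = of_int c"
  shows "cnj l = of_int c - l"
proof -
  have "l + cnj l = of_int c" unfolding complex_add_cnj assms by simp
  then show ?thesis by (simp add: algebra_simps)
qed

lemma unit_Im_eq_0_imp_twice_Re_Ints:
  assumes "norm l = 1" and "Im l = 0"
  shows "2 * Re l \<in> \<int>"
proof -
  have "\<bar>Re l\<bar> = 1" using assms by (simp add: cmod_eq_Re)
  then have "Re l = 1 \<or> Re l = -1" by linarith
  then show ?thesis by (metis Ints_1 Ints_minus Ints_mult Ints_numeral mult_minus_right mult.right_neutral)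
qed

lemma root_of_unity_from_trace:
  fixes l :: complex
  assumes sq: "l * l = of_int c * l - 1" and c: "\<bar>c\<bar> \<le> 2"
  shows "l ^ 12 = 1"
proof -
  have "c \<in> {-2, -1, 0, 1, 2}" using c by auto
  then show ?thesis
  proof (elim insertE emptyE)
    assume "c = -2"
    have "(l + 1) ^ 2 = l * l + 2 * l + 1" by (simp add: power2_eq_square algebra_simps)
    then have "(l + 1) ^ 2 = 0" using sq \<open>c = -2\<close> by simp
    then show ?thesis by (simp add: eq_neg_iff_add_eq_0[symmetric])
  next
    assume "c = -1"
    then have sq': "l * l = - l - 1" using sq by simp
    have "l ^ 3 = l * (l * l)" by (simp add: power3_eq_cube)
    also have "\<dots> = l * (- l - 1)" by (simp only: sq')
    also have "\<dots> = - (l * l) - l" by (simp add: algebra_simps)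
    also have "\<dots> = 1" by (simp add: sq')
    finally have "l ^ 3 = 1" .
    then show ?thesis using power_mult[of l 3 4] by simp
  next
    assume "c = 0"
    then have "l ^ 2 = -1" using sq by (simp add: power2_eq_square)
    then show ?thesis using power_mult[of l 2 6] by simp
  next
    assume "c = 1"
    then have sq': "l * l = l - 1" using sq by simp
    have "l ^ 3 = l * (l * l)" by (simp add: power3_eq_cube)
    also have "\<dots> = l * (l - 1)" by (simp only: sq')
    also have "\<dots> = l * l - l" by (simp add: algebra_simps)
    also have "\<dots> = -1" by (simp add: sq')
    finally have "l ^ 3 = -1" .
    then show ?thesis using power_mult[of l 3 4] by simp
  next
    assume "c = 2"
    then have "(l - 1) ^ 2 = 0" using sq by (simp add: power2_eq_square algebra_simps)
    then show ?thesis by simp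
  qed
qed

lemma power_int_periodic:
  fixes l :: complex
  assumes "l ^ N = 1" and "N > 0"
  shows "l powi n = l ^ nat (n mod int N)"
proof -
  have l0: "l \<noteq> 0" using assms by (auto simp: power_0_left)
  have "l powi n = l powi (int N * (n div int N) + n mod int N)" by simp
  also have "\<dots> = (l ^ N) powi (n div int N) * l powi (n mod int N)"
    by (simp only: power_int_add l0 power_int_mult power_int_of_nat simp_thms)
  also have "\<dots> = l ^ nat (n mod int N)" using assms by (simp add: power_int_def)
  finally show ?thesis .
qed

text \<open>If the trace 2 Re l is not an integer, \<int>[l, 1/l] contains arbitrarily small non-zero
  elements: powers of the fractional part of l + 1/l.\<close>
lemma int_laurent_small_elements:
  assumes l: "norm l = 1" and c: "2 * Re l \<notin> \<int>" and e: "e > 0"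
  shows "\<exists>w\<in>int_laurent l. w \<noteq> 0 \<and> norm w < e"
proof -
  define x where "x = 2 * Re l - of_int \<lfloor>2 * Re l\<rfloor>"
  have x_pos: "x > 0"
    using c unfolding x_def by (metis Ints_of_int diff_gt_0_iff_gt le_less of_int_floor_le)
  have x_lt1: "x < 1" unfolding x_def by linarith
  have "complex_of_real x = l + 1 / l + - of_int \<lfloor>2 * Re l\<rfloor>"
    unfolding x_def unit_complex_cnj(2)[OF l] complex_add_cnj by simp
  then have x_in: "complex_of_real x \<in> int_laurent l"
    by (simp only: int_laurent.add int_laurent.uminus int_laurent_of_int int_laurent_self
        int_laurent_inverse flip: inverse_eq_divide)
  obtain n where "x ^ n < e" using real_arch_pow_inv[OF e x_lt1] by blast
  moreover have "complex_of_real x ^ n \<in> int_laurent l"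
    by (induction n) (auto intro: int_laurent.one int_laurent_mult x_in)
  ultimately show ?thesis using x_pos by (intro bexI[of _ "complex_of_real x ^ n"]) (auto simp: norm_power)
qed

lemma lattice_approximation:
  assumes "Im l \<noteq> 0"
  shows "\<exists>j k :: int. norm (d - (of_int j + of_int k * l)) < 1 + norm l"
proof -
  define \<beta> where "\<beta> = Im d / Im l"
  define \<alpha> where "\<alpha> = Re d - \<beta> * Re l"
  have d: "d = of_real \<alpha> + of_real \<beta> * l"
    using assms by (intro complex_eqI) (simp_all add: \<alpha>_def \<beta>_def)
  define a where "a = \<alpha> - \<lfloor>\<alpha>\<rfloor>"
  define b where "b = \<beta> - \<lfloor>\<beta>\<rfloor>"
  have "d - (of_int \<lfloor>\<alpha>\<rfloor> + of_int \<lfloor>\<beta>\<rfloor> * l) = of_real a + of_real b * l"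
    by (simp add: d a_def b_def algebra_simps)
  then have "norm (d - (of_int \<lfloor>\<alpha>\<rfloor> + of_int \<lfloor>\<beta>\<rfloor> * l)) \<le> \<bar>a\<bar> + \<bar>b\<bar> * norm l"
    using norm_triangle_ineq[of "of_real a" "of_real b * l"] by (simp add: norm_mult)
  also have "\<dots> < 1 + norm l"
  proof -
    have "norm l > 0" using assms by auto
    then have "\<bar>b\<bar> * norm l < 1 * norm l"
      unfolding b_def by (intro mult_strict_right_mono) linarith+
    then show ?thesis unfolding a_def by linarith
  qed
  finally show ?thesis by blast
qed

text \<open>Scaling the
  lattice \<int> + \<int> l by a small element w of \<int>[l, 1/l] gives arbitrarily fine nets of
  translation vectors t w (\<int> + \<int> l).\<close>
lemma dense_orbit:
  assumes l: "norm l = 1" and c: "2 * Re l \<notin> \<int>" and t: "t \<noteq> 0"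
  shows "closure (orbit (rot_group l t) z) = UNIV"
proof -
  have l0: "l \<noteq> 0" using l by auto
  have Im: "Im l \<noteq> 0" using unit_Im_eq_0_imp_twice_Re_Ints[OF l] c by blast
  have "y \<in> closure (orbit (rot_group l t) z)" for y
    unfolding closure_approachable
  proof (intro allI impI)
    fix e :: real assume e: "e > 0"
    have "e / (2 * norm t) > 0" using e t by simp
    then obtain w where w: "w \<in> int_laurent l" "w \<noteq> 0" "norm w < e / (2 * norm t)"
      using int_laurent_small_elements[OF l c] by blast
    define d where "d = (y - z) / (t * w)"
    obtain j k :: int where jk: "norm (d - (of_int j + of_int k * l)) < 2"
      using lattice_approximation[OF Im, of d] l by auto
    define r where "r = (of_int j + of_int k * l) * w"
    have "r \<in> int_laurent l"
      unfolding r_def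
      by (intro int_laurent_mult int_laurent.add int_laurent_self int_laurent_of_int w(1))
    then have in_orbit: "z + t * r \<in> orbit (rot_group l t) z"
      unfolding orbit_rot_group[OF l0] by (intro CollectI exI[of _ 0] exI[of _ r]) simp
    have "z + t * r - y = (t * w) * ((of_int j + of_int k * l) - d)"
      using t w(2) unfolding d_def r_def by (simp add: field_simps)
    then have "dist (z + t * r) y = norm t * norm w * norm (d - (of_int j + of_int k * l))"
      by (simp add: dist_norm norm_mult norm_minus_commute)
    also have "\<dots> \<le> norm t * norm w * 2"
      using jk by (intro mult_left_mono) auto
    also have "\<dots> < e"
      using w(3) t by (simp add: field_simps)
    finally show "\<exists>p\<in>orbit (rot_group l t) z. dist p y < e" using in_orbit by blast
  qed
  then show ?thesis by auto
qed

lemma uniformly_discrete_imp_closed_discrete: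
  fixes A :: "complex set"
  assumes d: "d > 0" and sep: "\<And>x y. x \<in> A \<Longrightarrow> y \<in> A \<Longrightarrow> x \<noteq> y \<Longrightarrow> d \<le> dist x y"
  shows "closed_discrete A"
  unfolding closed_discrete_def
proof (intro conjI ballI)
  have close_eq: "y = x" if "x \<in> A" "y \<in> A" "dist y x < d" for x y
    using sep[OF that(1,2)] that(3) by (metis dist_commute not_le)
  show "closed A" using discrete_imp_closed[OF d] close_eq by blast
  fix x assume x: "x \<in> A"
  have "ball x d \<inter> A = {x}" using close_eq[OF x] x d by (auto simp: dist_commute)
  then show "\<exists>e>0. ball x e \<inter> A = {x}" using d by blast
qed

lemma closed_discrete_isolated:
  assumes "closed_discrete B"
  shows "\<exists>e>0. ball x e \<inter> B \<subseteq> {x}"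
proof (cases "x \<in> B")
  case True
  then show ?thesis using assms unfolding closed_discrete_def by blast
next
  case False
  have "open (- B)" using assms unfolding closed_discrete_def by auto
  then obtain e where "e > 0" "ball x e \<subseteq> - B" using False open_contains_ball by blast
  then show ?thesis by blast
qed

lemma closed_discrete_Un:
  assumes "closed_discrete A" and "closed_discrete B"
  shows "closed_discrete (A \<union> B)"
  unfolding closed_discrete_def
proof (intro conjI ballI)
  show "closed (A \<union> B)" using assms unfolding closed_discrete_def by auto
  fix x assume x: "x \<in> A \<union> B"
  obtain e1 where "e1 > 0" "ball x e1 \<inter> A \<subseteq> {x}" using closed_discrete_isolated[OF assms(1)] by blast
  moreover obtain e2 where "e2 > 0" "ball x e2 \<inter> B \<subseteq> {x}" using closed_discrete_isolated[OF assms(2)] by blast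
  ultimately have "min e1 e2 > 0" "ball x (min e1 e2) \<inter> (A \<union> B) = {x}" using x by auto
  then show "\<exists>e>0. ball x e \<inter> (A \<union> B) = {x}" by blast
qed

lemma closed_discrete_UN:
  assumes "finite I" and "\<And>i. i \<in> I \<Longrightarrow> closed_discrete (F i)"
  shows "closed_discrete (\<Union>i\<in>I. F i)"
  using assms
proof (induction I rule: finite_induct)
  case empty
  then show ?case by (simp add: closed_discrete_def)
next
  case (insert i I)
  then show ?case by (simp add: closed_discrete_Un)
qed

lemma dense_not_closed_discrete:
  assumes "closure A = UNIV"
  shows "\<not> closed_discrete (A :: complex set)"
proof
  assume cd: "closed_discrete A"
  then have "A = UNIV" using assms unfolding closed_discrete_def by (simp add: closure_closed)
  then obtain e where "e > 0" "ball 0 e = {0 :: complex}" using cd unfolding closed_discrete_def by auto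
  moreover have "complex_of_real (e / 2) \<in> ball 0 e" using \<open>e > 0\<close> by simp
  ultimately show False by simp
qed

definition int_lattice :: "complex \<Rightarrow> complex set" where
  "int_lattice l = {of_int j + of_int k * l | j k. True}"

lemma int_lattice_add_uminus:
  assumes "x \<in> int_lattice l" and "y \<in> int_lattice l"
  shows "x + y \<in> int_lattice l" and "- x \<in> int_lattice l" and "x - y \<in> int_lattice l"
proof -
  obtain j k j' k' where "x = of_int j + of_int k * l" "y = of_int j' + of_int k' * l"
    using assms unfolding int_lattice_def by blast
  then have "x + y = of_int (j + j') + of_int (k + k') * l"
    and "- x = of_int (- j) + of_int (- k) * l"
    and "x - y = of_int (j - j') + of_int (k - k') * l"
    by (simp_all add: algebra_simps)
  then show "x + y \<in> int_lattice l" and "- x \<in> int_lattice l" and "x - y \<in> int_lattice l"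
    unfolding int_lattice_def by blast+
qed

text \<open>If |l| = 1 has integral trace c, then l^2 = c l - 1 and \<int> + \<int> l is stable under
  multiplication and division by l.\<close>
lemma int_lattice_mult_div_l:
  assumes l: "norm l = 1" and c: "2 * Re l = of_int c" and x: "x \<in> int_lattice l"
  shows "l * x \<in> int_lattice l" and "x / l \<in> int_lattice l"
proof -
  obtain j k where x_eq: "x = of_int j + of_int k * l" using x unfolding int_lattice_def by blast
  have inv: "1 / l = of_int c - l" using unit_complex_cnj(2)[OF l] unit_cnj_eq[OF c] by simp
  have l0: "l \<noteq> 0" using l by auto
  have sq: "l * l = of_int c * l - 1"
    using inv l0 by (simp add: field_simps)
  have "l * x = of_int j * l + of_int k * (l * l)" unfolding x_eq by (simp add: algebra_simps)
  also have "\<dots> = of_int (- k) + of_int (j + k * c) * l" unfolding sq by (simp add: algebra_simps)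
  finally show "l * x \<in> int_lattice l" unfolding int_lattice_def by blast
  have "x / l = x * (of_int c - l)" by (simp flip: inv)
  also have "\<dots> = of_int (j * c) + of_int (k * c) * l - of_int j * l - of_int k * (l * l)"
    unfolding x_eq by (simp add: algebra_simps)
  also have "\<dots> = of_int (j * c + k) + of_int (- j) * l" unfolding sq by (simp add: algebra_simps)
  finally show "x / l \<in> int_lattice l" unfolding int_lattice_def by blast
qed

lemma int_laurent_eq_lattice:
  assumes l: "norm l = 1" and c: "2 * Re l = of_int c"
  shows "int_laurent l = int_lattice l"
proof
  show "int_laurent l \<subseteq> int_lattice l"
  proof
    fix x assume "x \<in> int_laurent l"
    then show "x \<in> int_lattice l"
    proof induction
      case one
      show ?case unfolding int_lattice_def by (intro CollectI exI[of _ 1] exI[of _ 0]) simp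
    next
      case (add x y)
      then show ?case using int_lattice_add_uminus(1) by blast
    next
      case (uminus x)
      then show ?case using int_lattice_add_uminus(2) by blast
    next
      case (mult_l x)
      then show ?case using int_lattice_mult_div_l(1)[OF l c] by blast
    next
      case (div_l x)
      then show ?case using int_lattice_mult_div_l(2)[OF l c] by blast
    qed
  qed
  show "int_lattice l \<subseteq> int_laurent l"
    unfolding int_lattice_def
    by (auto intro: int_laurent.add int_laurent_mult int_laurent_of_int int_laurent_self)
qed

text \<open>Its non-zero points have norm at least 1: |j + k l|^2 = j^2 + c j k + k^2 is a positive integer.\<close>
lemma int_lattice_norm_ge_1:
  assumes l: "norm l = 1" and c: "2 * Re l = of_int c"
    and b: "b \<in> int_lattice l" and b0: "b \<noteq> 0"
  shows "norm b \<ge> 1"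
proof -
  obtain j k where b_eq: "b = of_int j + of_int k * l" using b unfolding int_lattice_def by blast
  have cnj_l: "cnj l = of_int c - l" by (rule unit_cnj_eq[OF c])
  have unit: "l * cnj l = 1" by (rule unit_complex_cnj(1)[OF l])
  have "complex_of_real ((norm b)\<^sup>2) = b * cnj b" by (rule complex_norm_square)
  also have "\<dots> = of_int j ^ 2 + of_int (j * k) * (l + cnj l) + of_int k ^ 2 * (l * cnj l)"
    unfolding b_eq by (simp add: algebra_simps power2_eq_square)
  also have "\<dots> = of_int (j ^ 2 + j * k * c + k ^ 2)"
    unfolding unit by (simp add: cnj_l)
  finally have norm_sq: "(norm b)\<^sup>2 = of_int (j ^ 2 + j * k * c + k ^ 2)"
    by (metis of_real_eq_iff of_real_of_int_eq)
  then have "0 < j ^ 2 + j * k * c + k ^ 2" using b0 by (metis of_int_0_less_iff zero_less_power2 norm_eq_zero)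
  then have "(norm b)\<^sup>2 \<ge> 1" unfolding norm_sq by linarith
  then show ?thesis by (metis norm_ge_zero one_power2 power2_le_imp_le)
qed

lemma int_lattice_coset_closed_discrete:
  assumes l: "norm l = 1" and c: "2 * Re l = of_int c" and t: "t \<noteq> 0"
  shows "closed_discrete ((\<lambda>b. p + t * b) ` int_lattice l)"
proof (rule uniformly_discrete_imp_closed_discrete)
  show "norm t > 0" using t by simp
  fix x y assume "x \<in> (\<lambda>b. p + t * b) ` int_lattice l" "y \<in> (\<lambda>b. p + t * b) ` int_lattice l" "x \<noteq> y"
  then obtain b1 b2 where b: "b1 \<in> int_lattice l" "b2 \<in> int_lattice l" "x = p + t * b1" "y = p + t * b2"
    and ne: "b1 \<noteq> b2" by blast
  have "norm (b1 - b2) \<ge> 1"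
    using int_lattice_norm_ge_1[OF l c int_lattice_add_uminus(3)[OF b(1,2)]] ne by simp
  moreover have "dist x y = norm t * norm (b1 - b2)"
    unfolding b by (simp add: dist_norm norm_mult flip: right_diff_distrib)
  ultimately show "norm t \<le> dist x y" using mult_left_mono[of 1 "norm (b1 - b2)" "norm t"] by simp
qed

text \<open>Part (ii): for |l| = 1 with integral trace and t \<noteq> 0, every orbit is a union of at most
  twelve cosets of the lattice t (\<int> + \<int> l), hence closed and discrete.\<close>
lemma discrete_orbit:
  assumes l: "norm l = 1" and c: "2 * Re l \<in> \<int>" and t: "t \<noteq> 0"
  shows "closed_discrete (orbit (rot_group l t) z)"
proof -
  obtain c :: int where c: "2 * Re l = of_int c" using c by (elim Ints_cases)
  have l0: "l \<noteq> 0" using l by auto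
  have "l * l = of_int c * l - 1"
    using unit_complex_cnj(2)[OF l] unit_cnj_eq[OF c] l0 by (simp add: field_simps)
  moreover have "\<bar>c\<bar> \<le> 2"
    using abs_Re_le_cmod[of l] l c by linarith
  ultimately have l12: "l ^ 12 = 1" by (rule root_of_unity_from_trace)
  have "orbit (rot_group l t) z = (\<Union>m\<in>{..<12::nat}. (\<lambda>b. l ^ m * z + t * b) ` int_lattice l)"
    unfolding orbit_rot_group[OF l0] int_laurent_eq_lattice[OF l c]
  proof safe
    fix n r assume "r \<in> int_lattice l"
    moreover have "nat (n mod 12) < 12" by simp
    ultimately show "l powi n * z + t * r \<in> (\<Union>m\<in>{..<12::nat}. (\<lambda>b. l ^ m * z + t * b) ` int_lattice l)"
      using power_int_periodic[OF l12, of n] by force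
  next
    fix m :: nat and b assume "b \<in> int_lattice l"
    then show "\<exists>n r. l ^ m * z + t * b = l powi n * z + t * r \<and> r \<in> int_lattice l"
      by (intro exI[of _ "int m"] exI[of _ b]) simp
  qed
  also have "closed_discrete \<dots>"
    by (intro closed_discrete_UN int_lattice_coset_closed_discrete[OF l c t]) simp
  finally show ?thesis .
qed

lemma rotation_pair_group:
  assumes "l \<noteq> 0"
  shows "gen_group {\<lambda>z. l * z, \<lambda>z. l * (z - a) + a} = rot_group l (a * (1 - l) / l)"
proof -
  have "l * (a * (1 - l) / l) = a * (1 - l)" using assms by simp
  then have "(\<lambda>z. l * (z - a) + a) = (\<lambda>z. l * z + l * (a * (1 - l) / l))"
    by (simp add: fun_eq_iff algebra_simps)
  then show ?thesis by simp
qed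

lemma cis_eq_1_imp:
  assumes "cis \<theta> = 1"
  shows "\<theta> \<in> {2 * pi * of_int k | k. True}"
proof -
  have "cos \<theta> = 1" using arg_cong[OF assms, of Re] by simp
  then obtain n :: int where "\<theta> = of_int n * 2 * pi" unfolding cos_one_2pi_int by blast
  then show ?thesis by (auto simp: mult.commute)
qed

theorem theorem3p1:
  fixes \<theta> :: real and a :: complex
  assumes "\<theta> \<notin> {2 * pi * of_int k | k. True}"
    and "a \<noteq> 0"
  defines "h \<equiv> (\<lambda>z. cis \<theta> * z)"
    and "f \<equiv> (\<lambda>z. cis \<theta> * (z - a) + a)"
  defines "G \<equiv> gen_group {h, f}"
  shows "((\<forall>z. closure (orbit G z) = UNIV) \<longleftrightarrow> \<theta> \<notin> H2 \<union> H3)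
       \<and> ((\<forall>z. closed_discrete (orbit G z)) \<longleftrightarrow> \<theta> \<in> H2 \<union> H3)
       \<and> (\<theta> \<in> H2 \<union> H3 \<longleftrightarrow> f \<in> SR1)
       \<and> ((\<forall>z. closure (orbit G z) = UNIV) \<noteq> (\<forall>z. closed_discrete (orbit G z)))"
proof -
  define l where "l = cis \<theta>"
  define t where "t = a * (1 - l) / l"
  have l: "norm l = 1" and l0: "l \<noteq> 0" and Re_l: "Re l = cos \<theta>" unfolding l_def by simp_all
  have t: "t \<noteq> 0" using assms cis_eq_1_imp l0 unfolding t_def l_def by auto
  have G_eq: "G = rot_group l t"
    unfolding G_def h_def f_def t_def l_def by (rule rotation_pair_group) simp
  have H: "\<theta> \<in> H2 \<union> H3 \<longleftrightarrow> 2 * Re l \<in> \<int>" unfolding Re_l by (rule H_iff_twice_cos_Ints)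
  have SR1: "\<theta> \<in> H2 \<union> H3 \<longleftrightarrow> f \<in> SR1" unfolding f_def by (simp only: rotation_about_in_SR1_iff)
  have exclusive: "\<not> (closure (orbit G 0) = UNIV \<and> closed_discrete (orbit G 0))"
    using dense_not_closed_discrete by blast
  show ?thesis
  proof (cases "\<theta> \<in> H2 \<union> H3")
    case True
    then have "\<forall>z. closed_discrete (orbit G z)" unfolding G_eq using discrete_orbit[OF l _ t] H by blast
    with True SR1 exclusive show ?thesis by auto
  next
    case False
    then have "\<forall>z. closure (orbit G z) = UNIV" unfolding G_eq using dense_orbit[OF l _ t] H by blast
    with False SR1 exclusive show ?thesis by auto
  qed
qed

end
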